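(* Let $k_0\in\mathbb{R}\setminus\{0\}$, $N\ge 0$, and real numbers $x_1<\dots<x_N$. Put $I_0=(-\infty,x_1)$, $I_j=(x_j,x_{j+1})$ for $1\le j\le N-1$, $I_N=(x_N,\infty)$ (if $N=0$, $I_0=\mathbb{R}$). Let $w_j:I_j\to\mathbb{C}$, $j=0,\dots,N$, be continuous and piecewise differentiable, and assume: (a) for each $j=1,\dots,N$, the functions $w_j^-(x):=w_{j-1}(x)-\frac{i}{x-x_j}$ on $I_{j-1}$ and $w_j^+(x):=w_j(x)-\frac{i}{x-x_j}$ on $I_j$ are bounded as $x\to x_j-0$ and as $x\to x_j+0$, respectively; (b) $w_0(x)=k_0+\tilde w_{-\infty}(x)$ with $\tilde w_{-\infty}(x)=O(|x|^{-2})$ as $x\to-\infty$, and $w_N(x)=-k_0+\tilde w_{\infty}(x)$ with $\tilde w_\infty(x)=O(|x|^{-2})$ as $x\to+\infty$. Choose arbitrary points $X_j\in I_j$ ($j=0,\dots,N$) and an arbitrary $\rho_0\in\mathbb{C}\setminus\{0\}$, and define recursively for $j=1,\dots,N$ $$\rho_j=\rho_{j-1}\,\frac{X_j-x_j}{X_{j-1}-x_j}\exp\!\Big[i\int_{X_j}^{x_j}w_j^+(\xi)\,d\xi-i\int_{X_{j-1}}^{x_j}w_j^-(\xi)\,d\xi\Big].$$ Define $\psi_0(x)=\rho_j\exp\!\big[-i\int_{X_j}^{x}w_j(\xi)\,d\xi\big]$ for $x\in I_j$, and $\psi_0(x_j)=0$ for $j=1,\dots,N$. Then: (1) $\psi_0\in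 C^1(\mathbb{R})$; (2) there exist nonzero constants $\rho_\pm\in\mathbb{C}$ with $\lim_{x\to\pm\infty}[\psi_0(x)-\rho_\pm e^{\pm ik_0x}]=0$; (3) for each $j$, at every point of $I_j$ where $w_j$ is differentiable, $\psi_0$ satisfies $-\psi_0''+U_j(x)\psi_0=k_0^2\psi_0$ with $U_j(x)=-w_j(x)^2-i\,w_j'(x)+k_0^2$.
   Context: The integrals in the recursion are (convergent) improper integrals up to the endpoint $x_j$. A function with properties (1)–(3) is a spectral-singularity solution of the Schrödinger equation $-\psi''+U\psi=k^2\psi$ at $k=k_0$ with potential $U=-w^2-iw'+k_0^2$ (laser if $k_0>0$, coherent perfect absorber if $k_0<0$). *)

theory Defs
  imports "HOL-Analysis.Analysis"
begin

definition Ivl :: "nat \<Rightarrow> (nat \<Rightarrow> real) \<Rightarrow> nat \<Rightarrow> real set" where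
  "Ivl N x j =
     (if N = 0 then UNIV
      else if j = 0 then {..< x 1}
      else if j = N then {x N <..}
      else {x j <..< x (Suc j)})"

definition oint :: "(real \<Rightarrow> complex) \<Rightarrow> real \<Rightarrow> real \<Rightarrow> complex" where
  "oint f a b = (if a \<le> b then integral {a..b} f else - integral {b..a} f)"

end

theory Submission
  imports Defs
begin

text \<open>On each interval \<open>I\<^sub>j\<close> the function \<open>\<psi>\<^sub>0 = \<rho>\<^sub>j exp (-\<i> \<integral> w\<^sub>j)\<close> solves
  \<open>\<psi>' = -\<i> w\<^sub>j \<psi>\<close>, so \<open>\<psi>'' = (-w\<^sub>j\<^sup>2 - \<i> w\<^sub>j') \<psi>\<close>, which is the Schroedinger equation.
  Near a node \<open>x\<^sub>j\<close> the regularised integrand \<open>w - \<i> / (\<xi> - x\<^sub>j)\<close> is bounded, so its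
  integral converges at \<open>x\<^sub>j\<close>, and the pole contributes the factor
  \<open>(t - x\<^sub>j) / (X - x\<^sub>j)\<close> to \<open>exp (-\<i> \<integral> w)\<close>. Hence \<open>\<psi>\<^sub>0 (t) / (t - x\<^sub>j)\<close> and
  \<open>\<psi>\<^sub>0' (t) = \<psi>\<^sub>0 (t) / (t - x\<^sub>j) - \<i> (w - \<i> / (t - x\<^sub>j)) \<psi>\<^sub>0 (t)\<close> have the same one-sided
  limits at \<open>x\<^sub>j\<close>; the recursion for \<open>\<rho>\<^sub>j\<close> makes the left and right limits equal, and
  since \<open>\<psi>\<^sub>0 (x\<^sub>j) = 0\<close> this common value is \<open>\<psi>\<^sub>0' (x\<^sub>j)\<close>. At \<open>\<plusminus>\<infinity>\<close> the integrand
  \<open>w \<plusminus> k\<^sub>0\<close> is \<open>O(t\<^sup>-\<^sup>2)\<close>, hence integrable, which gives plane-wave asymptotics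
  with nonzero amplitudes.\<close>

section \<open>Oriented integrals\<close>

lemma ivl_subset_convex:
  fixes S :: "real set"
  assumes "convex S" "a \<in> S" "b \<in> S"
  shows "{min a b..max a b} \<subseteq> S"
  using closed_segment_subset[OF assms(2,3,1)]
  by (simp add: closed_segment_eq_real_ivl min_def max_def split: if_splits)

lemma oint_eq_integral_diff:
  fixes f :: "real \<Rightarrow> complex"
  assumes "m \<le> a" "m \<le> b" "f integrable_on {m..max a b}"
  shows "oint f a b = integral {m..b} f - integral {m..a} f"
proof -
  have combine: "integral {m..u} f + integral {u..v} f = integral {m..v} f"
    if "m \<le> u" "u \<le> v" "v \<le> max a b" for u v
    by (rule Henstock_Kurzweil_Integration.integral_combine)
       (use that in \<open>auto intro: integrable_on_subinterval[OF assms(3)]\<close>)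
  show ?thesis
    using combine[of a b] combine[of b a] assms(1,2)
    by (cases "a \<le> b") (auto simp: oint_def algebra_simps)
qed

lemma oint_add:
  fixes f :: "real \<Rightarrow> complex"
  assumes "convex S" "continuous_on S f" "a \<in> S" "b \<in> S" "c \<in> S"
  shows "oint f a b + oint f b c = oint f a c"
proof -
  define m where "m = min a (min b c)"
  define M where "M = max a (max b c)"
  have "m \<in> S" "M \<in> S" using assms(3-5) by (auto simp: m_def M_def min_def max_def)
  then have "{m..M} \<subseteq> S" using ivl_subset_convex[OF assms(1)] by (fastforce simp: m_def M_def)
  then have "f integrable_on {m..M}"
    by (intro integrable_continuous_real continuous_on_subset[OF assms(2)])
  then have "f integrable_on {m..max u v}" if "u \<in> {a,b,c}" "v \<in> {a,b,c}" for u v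
    by (rule integrable_on_subinterval) (use that in \<open>auto simp: M_def\<close>)
  then show ?thesis
    using oint_eq_integral_diff[of m _ _ f] by (auto simp: m_def)
qed

lemma oint_diff:
  fixes f g :: "real \<Rightarrow> complex"
  assumes "convex S" "continuous_on S f" "continuous_on S g" "a \<in> S" "b \<in> S"
  shows "oint (\<lambda>x. f x - g x) a b = oint f a b - oint g a b"
proof -
  have sub: "{min a b..max a b} \<subseteq> S" using ivl_subset_convex assms by blast
  have "f integrable_on {min a b..max a b}" "g integrable_on {min a b..max a b}"
    using continuous_on_subset[OF assms(2) sub] continuous_on_subset[OF assms(3) sub]
    by (auto intro: integrable_continuous_real)
  then show ?thesis
    by (auto simp: oint_def integral_diff min_def max_def split: if_splits)
qed

lemma oint_fundamental_theorem:
  fixes H h :: "real \<Rightarrow> complex"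
  assumes "\<And>u. u \<in> {min a b..max a b} \<Longrightarrow> (H has_vector_derivative h u) (at u)"
  shows "oint h a b = H b - H a"
proof -
  have "(h has_integral (H v - H u)) {u..v}" if "u \<le> v" "{u..v} = {min a b..max a b}" for u v
    by (rule fundamental_theorem_of_calculus[OF that(1)])
       (use assms that(2) in \<open>auto intro: has_vector_derivative_at_within\<close>)
  from this[of a b] this[of b a] show ?thesis
    by (cases "a \<le> b") (auto simp: oint_def integral_unique)
qed

lemma oint_const: "oint (\<lambda>_. \<kappa>) a b = \<kappa> * complex_of_real (b - a)"
proof -
  have "oint (\<lambda>_. \<kappa>) a b = \<kappa> * complex_of_real b - \<kappa> * complex_of_real a"
    by (rule oint_fundamental_theorem) (auto intro!: derivative_eq_intros)
  then show ?thesis by (simp add: algebra_simps)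
qed

lemma oint_reflect: "oint (\<lambda>u. f (- u)) a b = - oint f (- a) (- b)"
  using Henstock_Kurzweil_Integration.integral_reflect_real[of "-b" "-a" f]
    Henstock_Kurzweil_Integration.integral_reflect_real[of "-a" "-b" f]
  by (auto simp: oint_def)

lemma norm_oint_le:
  fixes g :: "real \<Rightarrow> complex" and h :: "real \<Rightarrow> real"
  assumes "continuous_on {min a b..max a b} g" "continuous_on {min a b..max a b} h"
    "\<And>u. u \<in> {min a b..max a b} \<Longrightarrow> norm (g u) \<le> h u"
  shows "norm (oint g a b) \<le> integral {min a b..max a b} h"
proof -
  have "norm (integral {min a b..max a b} g) \<le> integral {min a b..max a b} h"
    by (rule integral_norm_bound_integral) (use assms in \<open>auto intro: integrable_continuous_real\<close>)
  then show ?thesis by (auto simp: oint_def min_def max_def split: if_splits)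
qed

lemma has_vector_derivative_oint:
  fixes f :: "real \<Rightarrow> complex"
  assumes "convex S" "open S" "continuous_on S f" "X \<in> S" "t \<in> S"
  shows "((\<lambda>u. oint f X u) has_vector_derivative f t) (at t)"
proof -
  obtain e where e: "e > 0" "ball t e \<subseteq> S" using assms openE by blast
  define m where "m = min X (t - e/2)"
  define M where "M = max X (t + e/2)"
  have "m \<in> S" "M \<in> S" using e assms by (auto simp: m_def M_def min_def max_def dist_real_def)
  then have "{m..M} \<subseteq> S" using ivl_subset_convex[OF assms(1)] by (fastforce simp: m_def M_def)
  then have cont: "continuous_on {m..M} f" by (rule continuous_on_subset[OF assms(3)])
  have tin: "t \<in> {m<..<M}" using e by (auto simp: m_def M_def)
  have "((\<lambda>u. integral {m..u} f - integral {m..X} f) has_vector_derivative f t) (at t)"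
    using integral_has_vector_derivative[OF cont, of t] tin
    by (auto simp: at_within_Icc_at intro!: derivative_eq_intros)
  then show ?thesis
  proof (rule has_vector_derivative_transform_within_open[OF _ _ tin])
    fix u assume "u \<in> {m<..<M}"
    then show "integral {m..u} f - integral {m..X} f = oint f X u"
      by (intro oint_eq_integral_diff[symmetric])
         (auto simp: m_def M_def intro!: integrable_continuous_real continuous_on_subset[OF cont])
  qed simp
qed

lemma oint_inverse:
  fixes \<kappa> :: complex
  assumes "c \<notin> {min a b..max a b}"
  shows "oint (\<lambda>\<xi>. \<kappa> / complex_of_real (\<xi> - c)) a b = \<kappa> * complex_of_real (ln ((b - c) / (a - c)))"
proof -
  have pos: "(u - c) / (a - c) > 0" if "u \<in> {min a b..max a b}" for u
    using assms that by (auto simp: min_def max_def zero_less_divide_iff split: if_splits)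
  have "oint (\<lambda>\<xi>. \<kappa> / complex_of_real (\<xi> - c)) a b
      = \<kappa> * complex_of_real (ln ((b - c) / (a - c))) - \<kappa> * complex_of_real (ln ((a - c) / (a - c)))"
  proof (rule oint_fundamental_theorem)
    fix u assume u: "u \<in> {min a b..max a b}"
    have "u - c \<noteq> 0" "a - c \<noteq> 0" using pos[OF u] by auto
    then have "((\<lambda>u. ln ((u - c) / (a - c))) has_real_derivative 1 / (u - c)) (at u)"
      using pos[OF u] by (auto intro!: derivative_eq_intros simp: divide_simps)
    then have "((\<lambda>u. \<kappa> * complex_of_real (ln ((u - c) / (a - c)))) has_vector_derivative
        \<kappa> * complex_of_real (1 / (u - c))) (at u)"
      by (intro has_vector_derivative_mult_right has_vector_derivative_of_real)
    then show "((\<lambda>u. \<kappa> * complex_of_real (ln ((u - c) / (a - c)))) has_vector_derivative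
        \<kappa> / complex_of_real (u - c)) (at u)"
      by (simp add: divide_complex_def)
  qed
  moreover have "a \<noteq> c" using assms by (auto simp: min_def max_def split: if_splits)
  ultimately show ?thesis by simp
qed

lemma norm_oint_le_const:
  fixes g :: "real \<Rightarrow> complex"
  assumes "continuous_on {min a b..max a b} g" "\<And>u. u \<in> {min a b..max a b} \<Longrightarrow> norm (g u) \<le> B"
  shows "norm (oint g a b) \<le> B * \<bar>b - a\<bar>"
proof -
  have "norm (oint g a b) \<le> integral {min a b..max a b} (\<lambda>_. B)"
    by (rule norm_oint_le) (use assms in auto)
  also have "\<dots> = B * \<bar>b - a\<bar>"
    by (cases "a \<le> b") (simp_all add: min_def max_def mult.commute)
  finally show ?thesis .
qed

lemma norm_oint_le_inverse_square:
  fixes g :: "real \<Rightarrow> complex"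
  assumes "0 < A" "A \<le> a" "A \<le> b" "continuous_on {min a b..max a b} g"
    and "\<And>u. u \<in> {min a b..max a b} \<Longrightarrow> norm (g u) \<le> C / u\<^sup>2"
  shows "norm (oint g a b) \<le> \<bar>C\<bar> / A"
proof -
  define m M where "m = min a b" and "M = max a b"
  have m: "A \<le> m" "m \<le> M" using assms by (auto simp: m_def M_def)
  have "((\<lambda>u. \<bar>C\<bar> / u\<^sup>2) has_integral (- \<bar>C\<bar> / M) - (- \<bar>C\<bar> / m)) {m..M}"
  proof (rule fundamental_theorem_of_calculus[OF m(2)])
    fix u assume "u \<in> {m..M}"
    then have "u \<noteq> 0" using m assms(1) by auto
    then have "((\<lambda>u. - \<bar>C\<bar> / u) has_real_derivative \<bar>C\<bar> / u\<^sup>2) (at u)"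
      by (auto intro!: derivative_eq_intros simp: power2_eq_square)
    then show "((\<lambda>u. - \<bar>C\<bar> / u) has_vector_derivative \<bar>C\<bar> / u\<^sup>2) (at u within {m..M})"
      by (simp add: has_real_derivative_iff_has_vector_derivative has_vector_derivative_at_within)
  qed
  then have "integral {m..M} (\<lambda>u. \<bar>C\<bar> / u\<^sup>2) = \<bar>C\<bar> / m - \<bar>C\<bar> / M"
    by (simp add: integral_unique)
  moreover have "norm (oint g a b) \<le> integral {m..M} (\<lambda>u. \<bar>C\<bar> / u\<^sup>2)"
    unfolding m_def M_def
  proof (rule norm_oint_le[OF assms(4)])
    show "continuous_on {min a b..max a b} (\<lambda>u. \<bar>C\<bar> / u\<^sup>2)"
      using m assms(1) by (intro continuous_intros) (auto simp: m_def M_def)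
    fix u assume "u \<in> {min a b..max a b}"
    have "C / u\<^sup>2 \<le> \<bar>C\<bar> / u\<^sup>2" by (intro divide_right_mono) auto
    then show "norm (g u) \<le> \<bar>C\<bar> / u\<^sup>2" using assms(5)[OF \<open>u \<in> _\<close>] by linarith
  qed
  moreover have "\<bar>C\<bar> / m \<le> \<bar>C\<bar> / A" "0 \<le> \<bar>C\<bar> / M"
    using m assms(1) by (auto intro!: divide_left_mono)
  ultimately show ?thesis by linarith
qed

lemma filter_Cauchy_convergent:
  fixes f :: "'b \<Rightarrow> 'a::complete_space"
  assumes "F \<noteq> bot"
    and "\<And>e. e > 0 \<Longrightarrow> \<exists>P. eventually P F \<and> (\<forall>x y. P x \<and> P y \<longrightarrow> dist (f x) (f y) < e)"
  shows "\<exists>L. (f \<longlongrightarrow> L) F"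
proof -
  have "cauchy_filter (filtermap f F)"
    using assms(2) by (subst cauchy_filter_metric_filtermap) auto
  moreover have "filtermap f F \<noteq> bot" using assms(1) by (simp add: filtermap_bot_iff)
  ultimately obtain c where "filtermap f F \<le> nhds c"
    using cauchy_filter_complete_converges[OF _ complete_UNIV] by (metis top_greatest principal_UNIV)
  then show ?thesis unfolding filterlim_def by blast
qed

lemma oint_Cauchy_convergent:
  fixes g :: "real \<Rightarrow> complex"
  assumes "convex S" "continuous_on S g" "X \<in> S" "F \<noteq> bot"
    and "\<And>e. e > 0 \<Longrightarrow> \<exists>P. eventually P F \<and>
           (\<forall>a b. P a \<and> P b \<longrightarrow> a \<in> S \<and> b \<in> S \<and> norm (oint g a b) < e)"
  shows "\<exists>L. ((\<lambda>t. oint g X t) \<longlongrightarrow> L) F"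
proof (rule filter_Cauchy_convergent[OF assms(4)])
  fix e :: real assume "e > 0"
  then obtain P where P: "eventually P F"
    "\<And>a b. P a \<Longrightarrow> P b \<Longrightarrow> a \<in> S \<and> b \<in> S \<and> norm (oint g a b) < e"
    using assms(5) by meson
  have "dist (oint g X a) (oint g X b) < e" if "P a" "P b" for a b
  proof -
    have "b \<in> S" "a \<in> S" using P(2)[OF that] by auto
    from oint_add[OF assms(1-3) this] have "oint g X b + oint g b a = oint g X a" .
    then have "oint g X a - oint g X b = oint g b a" by (metis add_diff_cancel_left')
    then have "dist (oint g X a) (oint g X b) = norm (oint g b a)" by (simp add: dist_norm)
    then show ?thesis using P(2)[OF that(2,1)] by simp
  qed
  then show "\<exists>P. eventually P F \<and> (\<forall>a b. P a \<and> P b \<longrightarrow> dist (oint g X a) (oint g X b) < e)"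
    using P(1) by blast
qed

lemma oint_convergent_at_bounded_integrand:
  fixes g :: "real \<Rightarrow> complex"
  assumes "convex S" "c \<notin> S" "continuous_on S g" "X \<in> S" "at c within S \<noteq> bot"
    and "\<forall>\<^sub>F t in at c within S. norm (g t) \<le> B"
  shows "\<exists>L. ((\<lambda>t. oint g X t) \<longlongrightarrow> L) (at c within S)"
proof (rule oint_Cauchy_convergent[OF assms(1,3,4,5)])
  obtain d where d: "d > 0" "\<And>t. t \<in> S \<Longrightarrow> t \<noteq> c \<Longrightarrow> dist t c < d \<Longrightarrow> norm (g t) \<le> B"
    using assms(6) unfolding eventually_at by blast
  fix e :: real assume "e > 0"
  define r where "r = min d (e / (2 * (\<bar>B\<bar> + 1)))"
  have r: "0 < r" "r \<le> d" using d(1) \<open>e > 0\<close> by (auto simp: r_def)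
  have "r * (2 * (\<bar>B\<bar> + 1)) \<le> e"
    using pos_le_divide_eq[of "2 * (\<bar>B\<bar> + 1)" r e] by (simp add: r_def)
  then have r_small: "2 * r * \<bar>B\<bar> < e" using r(1) by (simp add: algebra_simps)
  have "norm (oint g a b) < e" if "a \<in> S" "dist a c < r" "b \<in> S" "dist b c < r" for a b
  proof -
    have sub: "{min a b..max a b} \<subseteq> S" using ivl_subset_convex[OF assms(1)] that by blast
    have "norm (oint g a b) \<le> \<bar>B\<bar> * \<bar>b - a\<bar>"
    proof (rule norm_oint_le_const[OF continuous_on_subset[OF assms(3) sub]])
      fix u assume u: "u \<in> {min a b..max a b}"
      then have "dist u c < d" using that r(2) by (auto simp: dist_real_def)
      then show "norm (g u) \<le> \<bar>B\<bar>" using d(2)[of u] sub u assms(2) by force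
    qed
    also have "\<dots> \<le> \<bar>B\<bar> * (2 * r)"
      using that by (intro mult_left_mono) (auto simp: dist_real_def)
    finally show ?thesis using r_small by (simp add: mult.commute mult.left_commute)
  qed
  moreover have "\<forall>\<^sub>F t in at c within S. t \<in> S \<and> dist t c < r"
    using r(1) by (auto simp: eventually_at intro!: exI[of _ r])
  ultimately show "\<exists>P. eventually P (at c within S) \<and>
      (\<forall>a b. P a \<and> P b \<longrightarrow> a \<in> S \<and> b \<in> S \<and> norm (oint g a b) < e)"
    by blast
qed

lemma oint_convergent_at_top:
  fixes g :: "real \<Rightarrow> complex"
  assumes "convex S" "continuous_on S g" "X \<in> S" "{a..} \<subseteq> S"
    and "\<forall>\<^sub>F t in at_top. norm (g t) \<le> C / t\<^sup>2"
  shows "\<exists>L. ((\<lambda>t. oint g X t) \<longlongrightarrow> L) at_top"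
proof (rule oint_Cauchy_convergent[OF assms(1-3)])
  show "(at_top :: real filter) \<noteq> bot" by simp
  obtain A0 where A0: "\<And>t. t \<ge> A0 \<Longrightarrow> norm (g t) \<le> C / t\<^sup>2"
    using assms(5) unfolding eventually_at_top_linorder by blast
  fix e :: real assume "e > 0"
  define A where "A = max (max A0 a) (max 1 (2 * \<bar>C\<bar> / e))"
  have A: "A > 0" "A \<ge> A0" "A \<ge> a" "2 * \<bar>C\<bar> / e \<le> A" by (auto simp: A_def)
  then have "\<bar>C\<bar> / A \<le> e / 2" using \<open>e > 0\<close> by (simp add: field_simps)
  then have A_large: "\<bar>C\<bar> / A < e" using \<open>e > 0\<close> by linarith
  have "norm (oint g u v) < e" if "A \<le> u" "A \<le> v" for u v
  proof -
    have "{min u v..max u v} \<subseteq> {a..}" using that A(3) by (auto simp: min_def)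
    then have "{min u v..max u v} \<subseteq> S" using assms(4) by blast
    then have "norm (oint g u v) \<le> \<bar>C\<bar> / A"
      using that A(2) by (intro norm_oint_le_inverse_square[OF A(1)] A0 continuous_on_subset[OF assms(2)]) auto
    then show ?thesis using A_large by linarith
  qed
  then show "\<exists>P. eventually P at_top \<and> (\<forall>u v. P u \<and> P v \<longrightarrow> u \<in> S \<and> v \<in> S \<and> norm (oint g u v) < e)"
    using A(3) assms(4) by (intro exI[of _ "\<lambda>t. A \<le> t"]) auto
qed

lemma oint_convergent_at_bot:
  fixes g :: "real \<Rightarrow> complex"
  assumes "convex S" "continuous_on S g" "X \<in> S" "{..a} \<subseteq> S"
    and "\<forall>\<^sub>F t in at_bot. norm (g t) \<le> C / t\<^sup>2"
  shows "\<exists>L. ((\<lambda>t. oint g X t) \<longlongrightarrow> L) at_bot"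
proof -
  have "\<exists>L. ((\<lambda>t. oint (\<lambda>u. g (- u)) (- X) t) \<longlongrightarrow> L) at_top"
  proof (rule oint_convergent_at_top)
    show "convex (uminus ` S)" using convex_negations[OF assms(1)] .
    show "continuous_on (uminus ` S) (\<lambda>u. g (- u))"
      by (rule continuous_on_compose2[OF assms(2)]) (auto intro: continuous_intros)
    show "- X \<in> uminus ` S" using assms(3) by simp
    show "{- a..} \<subseteq> uminus ` S"
    proof
      fix u assume "u \<in> {- a..}"
      then have "- u \<in> S" using assms(4) by auto
      then show "u \<in> uminus ` S" by (rule rev_image_eqI) simp
    qed
    show "\<forall>\<^sub>F t in at_top. norm (g (- t)) \<le> C / t\<^sup>2"
      using assms(5) by (simp add: at_bot_mirror eventually_filtermap)
  qed
  then obtain L where "((\<lambda>t. - oint (\<lambda>u. g (- u)) (- X) (- t)) \<longlongrightarrow> - L) at_bot"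
    by (auto simp: filterlim_at_bot_mirror intro: tendsto_minus)
  moreover have "oint g X t = - oint (\<lambda>u. g (- u)) (- X) (- t)" for t
    using oint_reflect[of "\<lambda>u. g (- u)" X t] by simp
  ultimately show ?thesis by auto
qed

section \<open>Phase functions \<open>\<rho> exp (-\<i> \<integral> w)\<close>\<close>

lemma phase_factor_at_pole:
  fixes w :: "real \<Rightarrow> complex"
  assumes "convex S" "c \<notin> S" "continuous_on S w" "X \<in> S" "t \<in> S"
  shows "exp (- \<i> * oint w X t) = complex_of_real ((t - c) / (X - c)) *
           exp (- \<i> * oint (\<lambda>\<xi>. w \<xi> - \<i> / complex_of_real (\<xi> - c)) X t)"
proof -
  have pole: "c \<notin> {min X t..max X t}" using ivl_subset_convex assms by blast
  then have q: "(t - c) / (X - c) > 0"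
    by (auto simp: min_def max_def zero_less_divide_iff split: if_splits)
  have "continuous_on S (\<lambda>\<xi>. \<i> / complex_of_real (\<xi> - c))"
    by (intro continuous_intros) (use assms(2) in auto)
  from oint_diff[OF assms(1,3) this assms(4,5)] oint_inverse[OF pole, of \<i>]
  have "oint w X t = oint (\<lambda>\<xi>. w \<xi> - \<i> / complex_of_real (\<xi> - c)) X t
                     + \<i> * complex_of_real (ln ((t - c) / (X - c)))"
    by simp
  then have eq: "- \<i> * oint w X t = - \<i> * oint (\<lambda>\<xi>. w \<xi> - \<i> / complex_of_real (\<xi> - c)) X t
                           + complex_of_real (ln ((t - c) / (X - c)))"
    by (simp add: algebra_simps)
  have ln: "exp (complex_of_real (ln ((t - c) / (X - c)))) = complex_of_real ((t - c) / (X - c))"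
    using q by (simp only: exp_of_real exp_ln)
  show ?thesis unfolding eq exp_add ln by (rule mult.commute)
qed

lemma phase_has_vector_derivative:
  fixes w \<psi> :: "real \<Rightarrow> complex"
  assumes "convex S" "open S" "continuous_on S w" "X \<in> S" "t \<in> S"
    and \<psi>: "\<And>t. t \<in> S \<Longrightarrow> \<psi> t = \<rho> * exp (- \<i> * oint w X t)"
  shows "(\<psi> has_vector_derivative - \<i> * w t * \<psi> t) (at t)"
proof -
  have "((\<lambda>u. oint w X u) has_vector_derivative w t) (at t)"
    by (rule has_vector_derivative_oint[OF assms(1-5)])
  then have "((exp \<circ> (\<lambda>u. - \<i> * oint w X u)) has_vector_derivative
         (- \<i> * w t) * exp (- \<i> * oint w X t)) (at t)"
    by (intro field_vector_diff_chain_at has_vector_derivative_mult_right DERIV_exp)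
  then have "((\<lambda>u. \<rho> * exp (- \<i> * oint w X u)) has_vector_derivative
         \<rho> * ((- \<i> * w t) * exp (- \<i> * oint w X t))) (at t)"
    by (intro has_vector_derivative_mult_right) (simp add: o_def)
  then have "((\<lambda>u. \<rho> * exp (- \<i> * oint w X u)) has_vector_derivative - \<i> * w t * \<psi> t) (at t)"
    using \<psi>[OF assms(5)] by (simp add: algebra_simps)
  then show ?thesis
    by (rule has_vector_derivative_transform_within_open[OF _ assms(2,5)]) (use \<psi> in auto)
qed

lemma phase_vector_derivative_tendsto:
  fixes w \<psi> :: "real \<Rightarrow> complex"
  assumes "convex S" "open S" "continuous_on S w" "X \<in> S" "t \<in> S"
    and \<psi>: "\<And>t. t \<in> S \<Longrightarrow> \<psi> t = \<rho> * exp (- \<i> * oint w X t)"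
  shows "((\<lambda>u. vector_derivative \<psi> (at u)) \<longlongrightarrow> - \<i> * w t * \<psi> t) (at t)"
proof (rule Lim_transform_eventually)
  have "isCont w t" "isCont \<psi> t"
    using assms(3,2,5) phase_has_vector_derivative[OF assms]
    by (auto simp: continuous_on_eq_continuous_at has_vector_derivative_continuous)
  then show "((\<lambda>u. - \<i> * w u * \<psi> u) \<longlongrightarrow> - \<i> * w t * \<psi> t) (at t)"
    by (intro tendsto_intros) (auto simp: isCont_def)
  show "\<forall>\<^sub>F u in at t. - \<i> * w u * \<psi> u = vector_derivative \<psi> (at u)"
    using eventually_at_in_open'[OF assms(2,5)]
    by eventually_elim (metis vector_derivative_at phase_has_vector_derivative[OF assms(1-4) _ \<psi>])
qed

lemma phase_second_derivative:
  fixes w \<psi> :: "real \<Rightarrow> complex"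
  assumes "convex S" "open S" "continuous_on S w" "X \<in> S" "t \<in> S"
    and \<psi>: "\<And>t. t \<in> S \<Longrightarrow> \<psi> t = \<rho> * exp (- \<i> * oint w X t)"
    and w': "(w has_vector_derivative w') (at t)"
  shows "((\<lambda>u. vector_derivative \<psi> (at u)) has_vector_derivative
           (- (w t)\<^sup>2 - \<i> * w') * \<psi> t) (at t)"
proof -
  have d\<psi>: "(\<psi> has_vector_derivative - \<i> * w u * \<psi> u) (at u)" if "u \<in> S" for u
    by (rule phase_has_vector_derivative[OF assms(1-4) that \<psi>])
  have "((\<lambda>u. - \<i> * w u * \<psi> u) has_vector_derivative
          (- \<i> * w t) * (- \<i> * w t * \<psi> t) + (- \<i> * w') * \<psi> t) (at t)"
    by (rule has_vector_derivative_mult[OF has_vector_derivative_mult_right[OF w'] d\<psi>[OF assms(5)]])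
  then have "((\<lambda>u. vector_derivative \<psi> (at u)) has_vector_derivative
          (- \<i> * w t) * (- \<i> * w t * \<psi> t) + (- \<i> * w') * \<psi> t) (at t)"
    by (rule has_vector_derivative_transform_within_open[OF _ assms(2,5)])
       (simp add: vector_derivative_at[OF d\<psi>])
  moreover have "(- \<i> * w t) * (- \<i> * w t * \<psi> t) + (- \<i> * w') * \<psi> t = (- (w t)\<^sup>2 - \<i> * w') * \<psi> t"
    by (simp add: algebra_simps power2_eq_square)
  ultimately show ?thesis by simp
qed

lemma phase_plane_wave_limit:
  fixes w \<psi> :: "real \<Rightarrow> complex"
  assumes "convex S" "continuous_on S w" "X \<in> S" "\<rho> \<noteq> 0"
    and in_S: "\<forall>\<^sub>F t in F. t \<in> S"
    and \<psi>: "\<And>t. t \<in> S \<Longrightarrow> \<psi> t = \<rho> * exp (- \<i> * oint w X t)"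
    and lim: "((\<lambda>t. oint (\<lambda>\<xi>. w \<xi> - complex_of_real k) X t) \<longlongrightarrow> L) F"
  shows "\<exists>\<rho>'. \<rho>' \<noteq> 0 \<and> ((\<lambda>t. \<psi> t - \<rho>' * exp (- \<i> * complex_of_real (k * t))) \<longlongrightarrow> 0) F"
proof (intro exI conjI)
  let ?G = "\<lambda>t. oint (\<lambda>\<xi>. w \<xi> - complex_of_real k) X t"
  let ?E = "\<lambda>t. exp (- \<i> * complex_of_real (k * t))"
  define c where "c = \<rho> * exp (\<i> * complex_of_real (k * X))"
  show "c * exp (- \<i> * L) \<noteq> 0" using assms(4) by (simp add: c_def)
  have "((\<lambda>t. exp (- \<i> * ?G t) - exp (- \<i> * L)) \<longlongrightarrow> 0) F"
    using tendsto_exp[OF tendsto_mult[OF tendsto_const lim], of "- \<i>"] by (simp add: LIM_zero)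
  from tendsto_norm_zero[OF this]
  have "((\<lambda>t. ?E t * (exp (- \<i> * ?G t) - exp (- \<i> * L))) \<longlongrightarrow> 0) F"
  proof (rule Lim_null_comparison[rotated])
    have "norm (?E t) = 1" for t
      using norm_exp_i_times[of "- (k * t)"] by simp
    then show "\<forall>\<^sub>F t in F. norm (?E t * (exp (- \<i> * ?G t) - exp (- \<i> * L)))
                 \<le> norm (exp (- \<i> * ?G t) - exp (- \<i> * L))"
      by (simp add: norm_mult)
  qed
  then have "((\<lambda>t. c * (?E t * (exp (- \<i> * ?G t) - exp (- \<i> * L)))) \<longlongrightarrow> 0) F"
    using tendsto_mult[OF tendsto_const, of _ 0 F c] by simp
  moreover have "\<forall>\<^sub>F t in F. c * (?E t * (exp (- \<i> * ?G t) - exp (- \<i> * L)))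
                     = \<psi> t - c * exp (- \<i> * L) * ?E t"
    using in_S
  proof eventually_elim
    case (elim t)
    have W: "oint w X t = ?G t + complex_of_real k * complex_of_real (t - X)"
      using oint_diff[OF assms(1,2) continuous_on_const assms(3) elim] by (simp add: oint_const)
    have "- \<i> * oint w X t = \<i> * complex_of_real (k * X) + - \<i> * complex_of_real (k * t) + - \<i> * ?G t"
      unfolding W by (simp add: algebra_simps)
    then have "\<psi> t = c * ?E t * exp (- \<i> * ?G t)"
      unfolding \<psi>[OF elim] c_def by (simp only: exp_add mult.assoc)
    then show ?case by (simp add: algebra_simps)
  qed
  ultimately show "((\<lambda>t. \<psi> t - c * exp (- \<i> * L) * ?E t) \<longlongrightarrow> 0) F"
    by (rule Lim_transform_eventually)
qed

lemma phase_quotient_tendsto_at_pole: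
  fixes w \<psi> :: "real \<Rightarrow> complex"
  assumes S: "convex S" "c \<notin> S" and w: "continuous_on S w" and X: "X \<in> S"
    and \<psi>: "\<And>t. t \<in> S \<Longrightarrow> \<psi> t = \<rho> * exp (- \<i> * oint w X t)"
    and L: "((\<lambda>t. oint (\<lambda>\<xi>. w \<xi> - \<i> / complex_of_real (\<xi> - c)) X t) \<longlongrightarrow> L) (at c within S)"
  shows "((\<lambda>t. \<psi> t / complex_of_real (t - c)) \<longlongrightarrow> \<rho> / complex_of_real (X - c) * exp (- \<i> * L)) (at c within S)"
proof (rule Lim_transform_eventually)
  let ?g = "\<lambda>\<xi>. w \<xi> - \<i> / complex_of_real (\<xi> - c)"
  show "((\<lambda>t. \<rho> / complex_of_real (X - c) * exp (- \<i> * oint ?g X t))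
          \<longlongrightarrow> \<rho> / complex_of_real (X - c) * exp (- \<i> * L)) (at c within S)"
    by (intro tendsto_intros L)
  have "\<rho> / complex_of_real (X - c) * exp (- \<i> * oint ?g X t) = \<psi> t / complex_of_real (t - c)"
    if "t \<in> S" for t
  proof -
    have "complex_of_real t - complex_of_real c \<noteq> 0" "complex_of_real X - complex_of_real c \<noteq> 0"
      using that X S(2) by auto
    moreover have "\<psi> t = \<rho> * complex_of_real ((t - c) / (X - c)) * exp (- \<i> * oint ?g X t)"
      using \<psi>[OF that] phase_factor_at_pole[OF S w X that] by simp
    ultimately show ?thesis by (simp add: field_simps)
  qed
  then show "\<forall>\<^sub>F t in at c within S.
      \<rho> / complex_of_real (X - c) * exp (- \<i> * oint ?g X t) = \<psi> t / complex_of_real (t - c)"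
    by (auto simp: eventually_at_filter)
qed

lemma phase_limits_at_pole:
  fixes w \<psi> :: "real \<Rightarrow> complex"
  assumes S: "convex S" "open S" "c \<notin> S" and w: "continuous_on S w" and X: "X \<in> S"
    and nontrivial: "at c within S \<noteq> bot"
    and bounded: "\<forall>\<^sub>F t in at c within S. norm (w t - \<i> / complex_of_real (t - c)) \<le> B"
    and \<psi>: "\<And>t. t \<in> S \<Longrightarrow> \<psi> t = \<rho> * exp (- \<i> * oint w X t)"
  obtains L where
    "((\<lambda>t. oint (\<lambda>\<xi>. w \<xi> - \<i> / complex_of_real (\<xi> - c)) X t) \<longlongrightarrow> L) (at c within S)"
    "((\<lambda>t. \<psi> t / complex_of_real (t - c)) \<longlongrightarrow> \<rho> / complex_of_real (X - c) * exp (- \<i> * L)) (at c within S)"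
    "((\<lambda>t. vector_derivative \<psi> (at t)) \<longlongrightarrow> \<rho> / complex_of_real (X - c) * exp (- \<i> * L)) (at c within S)"
proof -
  let ?g = "\<lambda>\<xi>. w \<xi> - \<i> / complex_of_real (\<xi> - c)"
  let ?F = "at c within S"
  have "continuous_on S ?g" by (intro continuous_intros w) (use S(3) in auto)
  then obtain L where L: "((\<lambda>t. oint ?g X t) \<longlongrightarrow> L) ?F"
    using oint_convergent_at_bounded_integrand[OF S(1,3) _ X nontrivial bounded] by blast
  define K where "K = \<rho> / complex_of_real (X - c) * exp (- \<i> * L)"
  have in_S: "\<forall>\<^sub>F t in ?F. t \<in> S" by (simp add: eventually_at_filter)
  have lim_quotient: "((\<lambda>t. \<psi> t / complex_of_real (t - c)) \<longlongrightarrow> K) ?F"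
    unfolding K_def by (rule phase_quotient_tendsto_at_pole[OF S(1,3) w X \<psi> L])
  have "((\<lambda>t. complex_of_real (t - c)) \<longlongrightarrow> complex_of_real (c - c)) ?F"
    by (intro tendsto_intros)
  from tendsto_mult[OF this lim_quotient]
  have "((\<lambda>t. complex_of_real (t - c) * (\<psi> t / complex_of_real (t - c))) \<longlongrightarrow> 0) ?F" by simp
  moreover have "\<forall>\<^sub>F t in ?F. complex_of_real (t - c) * (\<psi> t / complex_of_real (t - c)) = \<psi> t"
    using in_S by eventually_elim (use S(3) in auto)
  ultimately have lim_\<psi>: "(\<psi> \<longlongrightarrow> 0) ?F" by (rule Lim_transform_eventually)
  have "((\<lambda>t. - \<i> * ?g t * \<psi> t) \<longlongrightarrow> 0) ?F"
  proof (rule Lim_null_comparison)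
    show "\<forall>\<^sub>F t in ?F. norm (- \<i> * ?g t * \<psi> t) \<le> B * norm (\<psi> t)"
      using bounded by eventually_elim (simp add: norm_mult mult_right_mono)
    show "((\<lambda>t. B * norm (\<psi> t)) \<longlongrightarrow> 0) ?F"
      using tendsto_mult[OF tendsto_const tendsto_norm_zero[OF lim_\<psi>], of B] by simp
  qed
  \<comment> \<open>\<open>\<psi>' = -\<i> w \<psi> = \<psi> / (t - c) - \<i> (w - \<i> / (t - c)) \<psi>\<close>, and the second term vanishes at \<open>c\<close>.\<close>
  from tendsto_add[OF lim_quotient this]
  have "((\<lambda>t. \<psi> t / complex_of_real (t - c) + - \<i> * ?g t * \<psi> t) \<longlongrightarrow> K) ?F" by simp
  moreover have "\<forall>\<^sub>F t in ?F. \<psi> t / complex_of_real (t - c) + - \<i> * ?g t * \<psi> t = vector_derivative \<psi> (at t)"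
    using in_S
  proof eventually_elim
    case (elim t)
    have "vector_derivative \<psi> (at t) = - \<i> * w t * \<psi> t"
      by (rule vector_derivative_at[OF phase_has_vector_derivative[OF S(1,2) w X elim \<psi>]])
    moreover have "- \<i> * ?g t * \<psi> t = - \<i> * w t * \<psi> t - \<psi> t / complex_of_real (t - c)"
      by (simp add: algebra_simps)
    ultimately show ?case by simp
  qed
  ultimately have "((\<lambda>t. vector_derivative \<psi> (at t)) \<longlongrightarrow> K) ?F"
    by (rule Lim_transform_eventually)
  then show ?thesis using that L lim_quotient unfolding K_def by blast
qed

lemma has_vector_derivative_if_quotient_tendsto:
  fixes \<psi> :: "real \<Rightarrow> complex"
  assumes "\<psi> c = 0" "((\<lambda>t. \<psi> t / complex_of_real (t - c)) \<longlongrightarrow> K) (at c)"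
  shows "(\<psi> has_vector_derivative K) (at c)"
proof -
  have "((\<lambda>t. (Re (\<psi> t) - Re (\<psi> c)) / (t - c)) \<longlongrightarrow> Re K) (at c)"
    using tendsto_Re[OF assms(2)] assms(1) by (simp add: Re_divide_of_real)
  moreover have "((\<lambda>t. (Im (\<psi> t) - Im (\<psi> c)) / (t - c)) \<longlongrightarrow> Im K) (at c)"
    using tendsto_Im[OF assms(2)] assms(1) by (simp add: Im_divide_of_real)
  ultimately show ?thesis
    unfolding has_vector_derivative_complex_iff has_field_derivative_iff by auto
qed

lemma phase_matching_at_pole:
  fixes wl wr \<psi> :: "real \<Rightarrow> complex"
  assumes SL: "convex SL" "open SL" "SL \<subseteq> {..<c}" and SR: "convex SR" "open SR" "SR \<subseteq> {c<..}"
    and \<delta>: "\<delta> > 0" "{c - \<delta><..<c} \<subseteq> SL" "{c<..<c + \<delta>} \<subseteq> SR"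
    and wl: "continuous_on SL wl" and wr: "continuous_on SR wr" and XL: "XL \<in> SL" and XR: "XR \<in> SR"
    and bl: "\<exists>B. \<forall>\<^sub>F t in at_left c. norm (wl t - \<i> / complex_of_real (t - c)) \<le> B"
    and br: "\<exists>B. \<forall>\<^sub>F t in at_right c. norm (wr t - \<i> / complex_of_real (t - c)) \<le> B"
    and \<psi>L: "\<And>t. t \<in> SL \<Longrightarrow> \<psi> t = \<rho>l * exp (- \<i> * oint wl XL t)"
    and \<psi>R: "\<And>t. t \<in> SR \<Longrightarrow> \<psi> t = \<rho>r * exp (- \<i> * oint wr XR t)"
    and \<psi>c: "\<psi> c = 0"
    and \<rho>r: "\<rho>r = \<rho>l * complex_of_real ((XR - c) / (XL - c)) *
            exp (\<i> * Lim (at_right c) (\<lambda>t. oint (\<lambda>\<xi>. wr \<xi> - \<i> / complex_of_real (\<xi> - c)) XR t)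
                 - \<i> * Lim (at_left c) (\<lambda>t. oint (\<lambda>\<xi>. wl \<xi> - \<i> / complex_of_real (\<xi> - c)) XL t))"
  shows "\<exists>K. (\<psi> has_vector_derivative K) (at c) \<and> ((\<lambda>t. vector_derivative \<psi> (at t)) \<longlongrightarrow> K) (at c)"
proof -
  have left: "at c within SL = at_left c"
    by (rule at_within_nhd[of c "ball c \<delta>"]) (use \<delta> SL in \<open>auto simp: dist_real_def\<close>)
  have right: "at c within SR = at_right c"
    by (rule at_within_nhd[of c "ball c \<delta>"]) (use \<delta> SR in \<open>auto simp: dist_real_def\<close>)
  have "c \<notin> SL" "c \<notin> SR" using SL(3) SR(3) by auto
  obtain BL BR where
    BL: "\<forall>\<^sub>F t in at_left c. norm (wl t - \<i> / complex_of_real (t - c)) \<le> BL" and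
    BR: "\<forall>\<^sub>F t in at_right c. norm (wr t - \<i> / complex_of_real (t - c)) \<le> BR"
    using bl br by blast
  obtain LL where
    LL: "((\<lambda>t. oint (\<lambda>\<xi>. wl \<xi> - \<i> / complex_of_real (\<xi> - c)) XL t) \<longlongrightarrow> LL) (at_left c)"
      "((\<lambda>t. \<psi> t / complex_of_real (t - c)) \<longlongrightarrow> \<rho>l / complex_of_real (XL - c) * exp (- \<i> * LL)) (at_left c)"
      "((\<lambda>t. vector_derivative \<psi> (at t)) \<longlongrightarrow> \<rho>l / complex_of_real (XL - c) * exp (- \<i> * LL)) (at_left c)"
    using trivial_limit_at_left_real BL
    by (rule phase_limits_at_pole[OF SL(1,2) \<open>c \<notin> SL\<close> wl XL _ _ \<psi>L, unfolded left])
  obtain LR where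
    LR: "((\<lambda>t. oint (\<lambda>\<xi>. wr \<xi> - \<i> / complex_of_real (\<xi> - c)) XR t) \<longlongrightarrow> LR) (at_right c)"
      "((\<lambda>t. \<psi> t / complex_of_real (t - c)) \<longlongrightarrow> \<rho>r / complex_of_real (XR - c) * exp (- \<i> * LR)) (at_right c)"
      "((\<lambda>t. vector_derivative \<psi> (at t)) \<longlongrightarrow> \<rho>r / complex_of_real (XR - c) * exp (- \<i> * LR)) (at_right c)"
    using trivial_limit_at_right_real BR
    by (rule phase_limits_at_pole[OF SR(1,2) \<open>c \<notin> SR\<close> wr XR _ _ \<psi>R, unfolded right])
  define K where "K = \<rho>l / complex_of_real (XL - c) * exp (- \<i> * LL)"
  \<comment> \<open>The recursion for \<open>\<rho>r\<close> is exactly the condition that the one-sided limits agree.\<close>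
  have "\<rho>r / complex_of_real (XR - c) * exp (- \<i> * LR) = K"
  proof -
    have "Lim (at_left c) (\<lambda>t. oint (\<lambda>\<xi>. wl \<xi> - \<i> / complex_of_real (\<xi> - c)) XL t) = LL"
         "Lim (at_right c) (\<lambda>t. oint (\<lambda>\<xi>. wr \<xi> - \<i> / complex_of_real (\<xi> - c)) XR t) = LR"
      using tendsto_Lim[OF trivial_limit_at_left_real LL(1)] tendsto_Lim[OF trivial_limit_at_right_real LR(1)]
      by simp_all
    then have "\<rho>r = \<rho>l * (complex_of_real (XR - c) / complex_of_real (XL - c)) * exp (\<i> * LR - \<i> * LL)"
      by (simp add: \<rho>r)
    moreover have "complex_of_real (XR - c) \<noteq> 0" "complex_of_real (XL - c) \<noteq> 0"
      using XR XL \<open>c \<notin> SR\<close> \<open>c \<notin> SL\<close> by auto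
    ultimately have "\<rho>r / complex_of_real (XR - c) = \<rho>l / complex_of_real (XL - c) * exp (\<i> * LR - \<i> * LL)"
      by (simp add: field_simps)
    moreover have "exp (\<i> * LR - \<i> * LL) * exp (- \<i> * LR) = exp (- \<i> * LL)"
      by (simp flip: exp_add)
    ultimately show ?thesis by (simp add: K_def mult.assoc)
  qed
  with LL(2,3) LR(2,3)
  have "((\<lambda>t. \<psi> t / complex_of_real (t - c)) \<longlongrightarrow> K) (at c)"
       "((\<lambda>t. vector_derivative \<psi> (at t)) \<longlongrightarrow> K) (at c)"
    unfolding K_def filterlim_at_split by simp_all
  then show ?thesis using has_vector_derivative_if_quotient_tendsto[of \<psi> c K] \<psi>c by blast
qed

lemma open_Ivl: "open (Ivl N x j)"
  by (simp add: Ivl_def)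

lemma convex_Ivl: "convex (Ivl N x j)"
  by (simp add: Ivl_def convex_real_interval)

lemma Ivl_subset_greaterThan: "1 \<le> j \<Longrightarrow> j \<le> N \<Longrightarrow> Ivl N x j \<subseteq> {x j<..}"
  by (auto simp: Ivl_def)

lemma Ivl_pred_subset_lessThan: "1 \<le> j \<Longrightarrow> j \<le> N \<Longrightarrow> Ivl N x (j - 1) \<subseteq> {..<x j}"
  by (cases "j = 1") (auto simp: Ivl_def)

lemma atLeast_subset_Ivl_last: "{x N + 1..} \<subseteq> Ivl N x N"
  by (auto simp: Ivl_def)

lemma atMost_subset_Ivl_first: "{..x 1 - 1} \<subseteq> Ivl N x 0"
  by (auto simp: Ivl_def)

lemma Ivl_one_sided_nhds:
  assumes "strict_mono_on {1..N} x" "1 \<le> j" "j \<le> N"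
  shows "\<exists>\<delta>>0. {x j - \<delta><..<x j} \<subseteq> Ivl N x (j - 1) \<and> {x j<..<x j + \<delta>} \<subseteq> Ivl N x j"
proof (intro exI conjI)
  define dl where "dl = (if j = 1 then 1 else x j - x (j - 1))"
  define dr where "dr = (if j = N then 1 else x (Suc j) - x j)"
  have "dl > 0" using strict_mono_onD[OF assms(1), of "j - 1" j] assms(2,3) by (auto simp: dl_def) arith
  moreover have "dr > 0" using strict_mono_onD[OF assms(1), of j "Suc j"] assms(2,3) by (auto simp: dr_def)
  ultimately show "min dl dr > 0" by simp
  show "{x j - min dl dr<..<x j} \<subseteq> Ivl N x (j - 1)"
    using assms(2,3) by (cases "j = 1") (auto simp: Ivl_def dl_def)
  show "{x j<..<x j + min dl dr} \<subseteq> Ivl N x j"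
    using assms(2,3) by (auto simp: Ivl_def dr_def)
qed

lemma Ivl_cover: "(\<exists>j\<le>N. t \<in> Ivl N x j) \<or> (\<exists>j. 1 \<le> j \<and> j \<le> N \<and> t = x j)"
proof (cases "N = 0 \<or> t < x 1")
  case True
  then show ?thesis by (intro disjI1 exI[of _ 0]) (auto simp: Ivl_def)
next
  case False
  define A where "A = {i \<in> {1..N}. x i \<le> t}"
  define j where "j = Max A"
  have A: "finite A" "1 \<in> A" using False by (auto simp: A_def)
  then have "j \<in> A" unfolding j_def by (intro Max_in) auto
  then have j: "1 \<le> j" "j \<le> N" "x j \<le> t" by (auto simp: A_def)
  have "t < x (Suc j)" if "j < N"
  proof (rule ccontr)
    assume "\<not> t < x (Suc j)"
    with that have "Suc j \<in> A" by (auto simp: A_def)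
    then show False using Max_ge[OF A(1)] by (fastforce simp: j_def)
  qed
  then show ?thesis
    using j False by (cases "x j = t"; cases "j = N") (auto simp: Ivl_def intro!: exI[of _ j])
qed

section \<open>Gluing across the nodes\<close>

lemma C1_differentiable_on_if_derivative_tendsto:
  fixes f :: "real \<Rightarrow> 'a::real_normed_vector"
  assumes "\<And>t. t \<in> S \<Longrightarrow> \<exists>K. (f has_vector_derivative K) (at t)
                                \<and> ((\<lambda>u. vector_derivative f (at u)) \<longlongrightarrow> K) (at t)"
  shows "f C1_differentiable_on S"
  unfolding C1_differentiable_on_eq
proof (intro conjI ballI continuous_at_imp_continuous_on)
  fix t assume "t \<in> S"
  then obtain K where K: "(f has_vector_derivative K) (at t)"
    "((\<lambda>u. vector_derivative f (at u)) \<longlongrightarrow> K) (at t)"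
    using assms by blast
  show "f differentiable at t" using K(1) by (rule differentiableI_vector)
  show "isCont (\<lambda>u. vector_derivative f (at u)) t"
    using K unfolding isCont_def by (simp add: vector_derivative_at)
qed

locale glued_phase =
  fixes N :: nat and x :: "nat \<Rightarrow> real" and w :: "nat \<Rightarrow> real \<Rightarrow> complex"
    and X :: "nat \<Rightarrow> real" and \<rho> :: "nat \<Rightarrow> complex" and \<psi> :: "real \<Rightarrow> complex"
  assumes x_mono: "strict_mono_on {1..N} x"
    and w_cont: "\<And>j. j \<le> N \<Longrightarrow> continuous_on (Ivl N x j) (w j)"
    and bnd_minus: "\<And>j. 1 \<le> j \<Longrightarrow> j \<le> N \<Longrightarrow>
          \<exists>B. \<forall>\<^sub>F t in at_left (x j). norm (w (j - 1) t - \<i> / complex_of_real (t - x j)) \<le> B"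
    and bnd_plus: "\<And>j. 1 \<le> j \<Longrightarrow> j \<le> N \<Longrightarrow>
          \<exists>B. \<forall>\<^sub>F t in at_right (x j). norm (w j t - \<i> / complex_of_real (t - x j)) \<le> B"
    and X_in: "\<And>j. j \<le> N \<Longrightarrow> X j \<in> Ivl N x j"
    and \<rho>_0: "\<rho> 0 \<noteq> 0"
    and \<rho>_rec: "\<And>j. 1 \<le> j \<Longrightarrow> j \<le> N \<Longrightarrow>
          \<rho> j = \<rho> (j - 1) * complex_of_real ((X j - x j) / (X (j - 1) - x j)) *
            exp (\<i> * Lim (at_right (x j))
                       (\<lambda>t. oint (\<lambda>\<xi>. w j \<xi> - \<i> / complex_of_real (\<xi> - x j)) (X j) t)
                 - \<i> * Lim (at_left (x j))
                       (\<lambda>t. oint (\<lambda>\<xi>. w (j - 1) \<xi> - \<i> / complex_of_real (\<xi> - x j)) (X (j - 1)) t))"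
    and \<psi>_Ivl: "\<And>j t. j \<le> N \<Longrightarrow> t \<in> Ivl N x j \<Longrightarrow> \<psi> t = \<rho> j * exp (- \<i> * oint (w j) (X j) t)"
    and \<psi>_nodes: "\<And>j. 1 \<le> j \<Longrightarrow> j \<le> N \<Longrightarrow> \<psi> (x j) = 0"
begin

lemma \<rho>_nonzero: "j \<le> N \<Longrightarrow> \<rho> j \<noteq> 0"
proof (induction j)
  case 0
  show ?case by (rule \<rho>_0)
next
  case (Suc j)
  have "X (Suc j) - x (Suc j) \<noteq> 0" "X j - x (Suc j) \<noteq> 0"
    using X_in[of "Suc j"] X_in[of j] Suc.prems
      Ivl_subset_greaterThan[of "Suc j" N x] Ivl_pred_subset_lessThan[of "Suc j" N x] by auto
  then show ?case using \<rho>_rec[of "Suc j"] Suc by simp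
qed

lemma derivative_tendsto:
  "\<exists>K. (\<psi> has_vector_derivative K) (at t) \<and> ((\<lambda>u. vector_derivative \<psi> (at u)) \<longlongrightarrow> K) (at t)"
  using Ivl_cover[of N t x]
proof (elim disjE exE conjE)
  fix j assume j: "j \<le> N" "t \<in> Ivl N x j"
  show ?thesis
    using phase_has_vector_derivative[OF convex_Ivl open_Ivl w_cont X_in j(2) \<psi>_Ivl]
      phase_vector_derivative_tendsto[OF convex_Ivl open_Ivl w_cont X_in j(2) \<psi>_Ivl] j(1)
    by blast
next
  fix j assume j: "1 \<le> j" "j \<le> N" and t: "t = x j"
  obtain \<delta> where \<delta>: "\<delta> > 0" "{x j - \<delta><..<x j} \<subseteq> Ivl N x (j - 1)" "{x j<..<x j + \<delta>} \<subseteq> Ivl N x j"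
    using Ivl_one_sided_nhds[OF x_mono j] by blast
  have "j - 1 \<le> N" using j by simp
  show ?thesis unfolding t
    by (rule phase_matching_at_pole[OF convex_Ivl open_Ivl Ivl_pred_subset_lessThan[OF j]
          convex_Ivl open_Ivl Ivl_subset_greaterThan[OF j] \<delta> w_cont[OF \<open>j - 1 \<le> N\<close>] w_cont[OF j(2)]
          X_in[OF \<open>j - 1 \<le> N\<close>] X_in[OF j(2)] bnd_minus[OF j] bnd_plus[OF j]
          \<psi>_Ivl[OF \<open>j - 1 \<le> N\<close>] \<psi>_Ivl[OF j(2)] \<psi>_nodes[OF j] \<rho>_rec[OF j]])
qed

lemma C1_differentiable: "\<psi> C1_differentiable_on UNIV"
  using derivative_tendsto by (rule C1_differentiable_on_if_derivative_tendsto)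

lemma second_derivative:
  assumes "j \<le> N" "y \<in> Ivl N x j" "(w j has_vector_derivative w') (at y)"
  shows "((\<lambda>t. vector_derivative \<psi> (at t)) has_vector_derivative (- (w j y)\<^sup>2 - \<i> * w') * \<psi> y) (at y)"
  by (rule phase_second_derivative[OF convex_Ivl open_Ivl w_cont[OF assms(1)] X_in[OF assms(1)]
        assms(2) \<psi>_Ivl[OF assms(1)] assms(3)])

lemma plane_wave_at_top:
  assumes "\<forall>\<^sub>F t in at_top. norm (w N t - complex_of_real k) \<le> C / t\<^sup>2"
  shows "\<exists>\<rho>'. \<rho>' \<noteq> 0 \<and> ((\<lambda>t. \<psi> t - \<rho>' * exp (- \<i> * complex_of_real (k * t))) \<longlongrightarrow> 0) at_top"
proof -
  have w: "continuous_on (Ivl N x N) (w N)" by (rule w_cont) simp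
  obtain L where "((\<lambda>t. oint (\<lambda>\<xi>. w N \<xi> - complex_of_real k) (X N) t) \<longlongrightarrow> L) at_top"
    using oint_convergent_at_top[OF convex_Ivl continuous_on_diff[OF w continuous_on_const] X_in atLeast_subset_Ivl_last assms]
    by blast
  moreover have "\<forall>\<^sub>F t in at_top. t \<in> Ivl N x N"
    using eventually_ge_at_top[of "x N + 1"] by (rule eventually_mono) (use atLeast_subset_Ivl_last in blast)
  ultimately show ?thesis
    by (intro phase_plane_wave_limit[OF convex_Ivl w X_in \<rho>_nonzero _ \<psi>_Ivl]) auto
qed

lemma plane_wave_at_bot:
  assumes "\<forall>\<^sub>F t in at_bot. norm (w 0 t - complex_of_real k) \<le> C / t\<^sup>2"
  shows "\<exists>\<rho>'. \<rho>' \<noteq> 0 \<and> ((\<lambda>t. \<psi> t - \<rho>' * exp (- \<i> * complex_of_real (k * t))) \<longlongrightarrow> 0) at_bot"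
proof -
  have w: "continuous_on (Ivl N x 0) (w 0)" by (rule w_cont) simp
  obtain L where "((\<lambda>t. oint (\<lambda>\<xi>. w 0 \<xi> - complex_of_real k) (X 0) t) \<longlongrightarrow> L) at_bot"
    using oint_convergent_at_bot[OF convex_Ivl continuous_on_diff[OF w continuous_on_const] X_in atMost_subset_Ivl_first assms]
    by blast
  moreover have "\<forall>\<^sub>F t in at_bot. t \<in> Ivl N x 0"
    using eventually_le_at_bot[of "x 1 - 1"] by (rule eventually_mono) (use atMost_subset_Ivl_first in blast)
  ultimately show ?thesis
    by (intro phase_plane_wave_limit[OF convex_Ivl w X_in \<rho>_nonzero _ \<psi>_Ivl]) auto
qed

end

theorem theorem2:
  fixes k0 :: real and N :: nat and x :: "nat \<Rightarrow> real"
    and w :: "nat \<Rightarrow> real \<Rightarrow> complex" and X :: "nat \<Rightarrow> real"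
    and \<rho>0 :: complex and \<rho> :: "nat \<Rightarrow> complex" and \<psi>0 :: "real \<Rightarrow> complex"
  assumes k0: "k0 \<noteq> 0"
    and x_mono: "strict_mono_on {1..N} x"
    and w_cont: "\<And>j. j \<le> N \<Longrightarrow> continuous_on (Ivl N x j) (w j)"
    and w_pw: "\<And>j a b. j \<le> N \<Longrightarrow> {a..b} \<subseteq> Ivl N x j \<Longrightarrow>
                  w j piecewise_differentiable_on {a..b}"
    and bnd_minus: "\<And>j. 1 \<le> j \<Longrightarrow> j \<le> N \<Longrightarrow>
          \<exists>B. \<forall>\<^sub>F t in at_left (x j). norm (w (j - 1) t - \<i> / complex_of_real (t - x j)) \<le> B"
    and bnd_plus: "\<And>j. 1 \<le> j \<Longrightarrow> j \<le> N \<Longrightarrow>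
          \<exists>B. \<forall>\<^sub>F t in at_right (x j). norm (w j t - \<i> / complex_of_real (t - x j)) \<le> B"
    and asym_bot: "\<exists>C. \<forall>\<^sub>F t in at_bot. norm (w 0 t - complex_of_real k0) \<le> C / t\<^sup>2"
    and asym_top: "\<exists>C. \<forall>\<^sub>F t in at_top. norm (w N t + complex_of_real k0) \<le> C / t\<^sup>2"
    and X_in: "\<And>j. j \<le> N \<Longrightarrow> X j \<in> Ivl N x j"
    and \<rho>0: "\<rho>0 \<noteq> 0"
    and \<rho>_0: "\<rho> 0 = \<rho>0"
    and \<rho>_rec: "\<And>j. 1 \<le> j \<Longrightarrow> j \<le> N \<Longrightarrow>
          \<rho> j = \<rho> (j - 1) * complex_of_real ((X j - x j) / (X (j - 1) - x j)) *
            exp (\<i> * Lim (at_right (x j))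
                       (\<lambda>t. oint (\<lambda>\<xi>. w j \<xi> - \<i> / complex_of_real (\<xi> - x j)) (X j) t)
                 - \<i> * Lim (at_left (x j))
                       (\<lambda>t. oint (\<lambda>\<xi>. w (j - 1) \<xi> - \<i> / complex_of_real (\<xi> - x j)) (X (j - 1)) t))"
    and \<psi>0_I: "\<And>j t. j \<le> N \<Longrightarrow> t \<in> Ivl N x j \<Longrightarrow>
          \<psi>0 t = \<rho> j * exp (- \<i> * oint (w j) (X j) t)"
    and \<psi>0_pts: "\<And>j. 1 \<le> j \<Longrightarrow> j \<le> N \<Longrightarrow> \<psi>0 (x j) = 0"
  shows "\<psi>0 C1_differentiable_on UNIV
    \<and> (\<exists>\<rho>p \<rho>m. \<rho>p \<noteq> 0 \<and> \<rho>m \<noteq> 0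
         \<and> ((\<lambda>t. \<psi>0 t - \<rho>p * exp (\<i> * complex_of_real (k0 * t))) \<longlongrightarrow> 0) at_top
         \<and> ((\<lambda>t. \<psi>0 t - \<rho>m * exp (- \<i> * complex_of_real (k0 * t))) \<longlongrightarrow> 0) at_bot)
    \<and> (\<forall>j\<le>N. \<forall>y\<in>Ivl N x j. w j differentiable (at y) \<longrightarrow>
         (\<exists>\<psi>2. ((\<lambda>t. vector_derivative \<psi>0 (at t)) has_vector_derivative \<psi>2) (at y)
            \<and> - \<psi>2 + (- (w j y)\<^sup>2 - \<i> * vector_derivative (w j) (at y) + complex_of_real (k0\<^sup>2)) * \<psi>0 y
                = complex_of_real (k0\<^sup>2) * \<psi>0 y))"
proof -
  interpret glued_phase N x w X \<rho> \<psi>0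
  proof unfold_locales
    show "\<rho> 0 \<noteq> 0" using \<rho>_0 \<rho>0 by simp
  qed (fact x_mono w_cont bnd_minus bnd_plus X_in \<rho>_rec \<psi>0_I \<psi>0_pts)+
  obtain Cm Cp where
    "\<forall>\<^sub>F t in at_bot. norm (w 0 t - complex_of_real k0) \<le> Cm / t\<^sup>2"
    "\<forall>\<^sub>F t in at_top. norm (w N t - complex_of_real (- k0)) \<le> Cp / t\<^sup>2"
    using asym_bot asym_top by auto
  from plane_wave_at_bot[OF this(1)] plane_wave_at_top[OF this(2)]
  have plane_waves: "\<exists>\<rho>p \<rho>m. \<rho>p \<noteq> 0 \<and> \<rho>m \<noteq> 0
         \<and> ((\<lambda>t. \<psi>0 t - \<rho>p * exp (\<i> * complex_of_real (k0 * t))) \<longlongrightarrow> 0) at_top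
         \<and> ((\<lambda>t. \<psi>0 t - \<rho>m * exp (- \<i> * complex_of_real (k0 * t))) \<longlongrightarrow> 0) at_bot"
    by auto
  have "((\<lambda>t. vector_derivative \<psi>0 (at t)) has_vector_derivative
          (- (w j y)\<^sup>2 - \<i> * vector_derivative (w j) (at y)) * \<psi>0 y) (at y)"
    if "j \<le> N" "y \<in> Ivl N x j" "w j differentiable (at y)" for j y
    using second_derivative[OF that(1,2)] that(3) by (simp add: vector_derivative_works)
  then show ?thesis
    using C1_differentiable plane_waves by (fastforce simp: algebra_simps)
qed

end
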